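(* Let $I_1=(0,1]$, $I_2=(0,1)$, $I_3=(0,1/2)$. For each $d\in\{1,2,3\}$ and each $\alpha_d\in I_d$ there is a constant $0<C_u^{(d)}<\infty$ depending only on $d$ and $\alpha_d$ such that $$\int_0^t\int_{\mathbb R^d}\big|K^{\mathrm{LKS}}_{s;x}-K^{\mathrm{LKS}}_{s;x+z}\big|^2dx\,ds\le C_u^{(d)}|z|^{2\alpha_d}\big(1\vee\tfrac t4\big)$$ for all $t>0$ and $z\in\mathbb R^d$. The same estimate holds, with possibly different constants, with $K^{\mathrm{LKS}}$ replaced by $K^{\mathrm{SFO}}$.
   Context: $K^{\mathrm{LKS}}_{t;x}=(2\pi)^{-d}\int_{\mathbb R^d}e^{-\frac t8(-2+|\xi|^2)^2}\cos(\xi\cdot x)d\xi$ and $K^{\mathrm{SFO}}_{t;x}=(2\pi)^{-d}\int_{\mathbb R^d}e^{-\frac t8|\xi|^4}\cos(\xi\cdot x)d\xi$, $t>0$. *)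

theory Defs
  imports "HOL-Analysis.Analysis"
begin

text \<open>Kernels on R^d, with R^d rendered as a Euclidean space 'a of dimension d = DIM('a).
  The Fourier-type integrals are Lebesgue integrals over lborel.\<close>

definition K_LKS :: "real \<Rightarrow> 'a::euclidean_space \<Rightarrow> real" where
  "K_LKS t x = (2 * pi) powr (- real DIM('a)) *
     (\<integral>\<xi>. exp (- (t / 8) * (-2 + (norm \<xi>)\<^sup>2)\<^sup>2) * cos (\<xi> \<bullet> x) \<partial>lborel)"

definition K_SFO :: "real \<Rightarrow> 'a::euclidean_space \<Rightarrow> real" where
  "K_SFO t x = (2 * pi) powr (- real DIM('a)) *
     (\<integral>\<xi>. exp (- (t / 8) * (norm \<xi>) ^ 4) * cos (\<xi> \<bullet> x) \<partial>lborel)"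

definition alpha_range :: "nat \<Rightarrow> real \<Rightarrow> bool" where
  "alpha_range d \<alpha> =
     ((d = 1 \<and> 0 < \<alpha> \<and> \<alpha> \<le> 1) \<or> (d = 2 \<and> 0 < \<alpha> \<and> \<alpha> < 1) \<or> (d = 3 \<and> 0 < \<alpha> \<and> \<alpha> < 1/2))"

end

theory Submission
  imports Defs "HOL-Probability.Characteristic_Functions"
begin

(*
  Both kernels are of the form  K_s(x) = (2\<pi>)^-d \<integral> exp(-s P(\<xi>)/8) cos(\<xi>\<bullet>x) d\<xi>  for a symbol P.
  By Plancherel, \<integral> |K_s(x) - K_s(x+z)|^2 dx is at most
  (2\<pi>)^-d \<integral> exp(-s P/4) |1 - e^(i \<xi>\<bullet>z)|^2 d\<xi>  \<le>  4 |z|^(2\<alpha>) \<integral> exp(-s P/4) |\<xi>|^(2\<alpha>) d\<xi>.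
  Integrating over s \<in> [0,t] turns exp(-s P/4) into at most min t (4/P), which is \<le> t on the
  ball of radius 2 and \<le> 16 |\<xi>|^-4 outside it; |\<xi>|^(2\<alpha>-4) is integrable at infinity exactly
  when d < 4 - 2\<alpha>, which is what the ranges I_d encode.

  Plancherel is only needed as an inequality, and is obtained by Gaussian regularisation: against
  the weight exp(-|x|^2/(2\<sigma>^2)) the squared modulus of a Fourier transform becomes a double
  integral against the Fourier transform of the weight, a Gaussian of total mass (2\<pi>)^d, so a
  Schur test bounds it by (2\<pi>)^d \<integral> |f|^2; monotone convergence then lets \<sigma> \<rightarrow> \<infinity>.
*)

definition gaussian :: "real \<Rightarrow> 'a::euclidean_space \<Rightarrow> real" where
  "gaussian \<sigma> x = exp (- (norm x)\<^sup>2 / (2 * \<sigma>\<^sup>2))"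

definition gaussian_hat :: "real \<Rightarrow> 'a::euclidean_space \<Rightarrow> real" where
  "gaussian_hat \<sigma> \<xi> = (\<sigma> * sqrt (2 * pi)) ^ DIM('a) * exp (- (\<sigma> * norm \<xi>)\<^sup>2 / 2)"

lemma gaussian_measurable [measurable]: "gaussian \<sigma> \<in> borel_measurable borel"
  unfolding gaussian_def by measurable

lemma gaussian_hat_measurable [measurable]: "gaussian_hat \<sigma> \<in> borel_measurable borel"
  unfolding gaussian_hat_def by measurable

lemma gaussian_nonneg: "0 \<le> gaussian \<sigma> x"
  by (simp add: gaussian_def)

lemma gaussian_hat_nonneg: "0 < \<sigma> \<Longrightarrow> 0 \<le> gaussian_hat \<sigma> \<xi>"
  by (simp add: gaussian_hat_def)

lemma gaussian_hat_le: "0 < \<sigma> \<Longrightarrow> gaussian_hat \<sigma> (\<xi>::'a) \<le> (\<sigma> * sqrt (2 * pi)) ^ DIM('a::euclidean_space)"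
  by (simp add: gaussian_hat_def)

lemma gaussian_hat_minus: "gaussian_hat \<sigma> (- \<xi>) = gaussian_hat \<sigma> \<xi>"
  by (simp add: gaussian_hat_def)

lemma gaussian_real: "gaussian \<sigma> (y::real) = exp (- y\<^sup>2 / (2 * \<sigma>\<^sup>2))"
  by (simp add: gaussian_def)

lemma gaussian_real_eq_normal_density:
  "0 < \<sigma> \<Longrightarrow> gaussian \<sigma> (y::real) = sqrt (2 * pi * \<sigma>\<^sup>2) * normal_density 0 \<sigma> y"
  by (simp add: gaussian_real normal_density_def)

lemma integrable_gaussian_real:
  assumes "0 < \<sigma>" shows "integrable lborel (gaussian \<sigma> :: real \<Rightarrow> real)"
proof -
  have "gaussian \<sigma> = (\<lambda>y::real. sqrt (2 * pi * \<sigma>\<^sup>2) * normal_density 0 \<sigma> y)"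
    using assms by (simp add: fun_eq_iff gaussian_real_eq_normal_density)
  then show ?thesis
    using integrable_normal_density[OF assms, of 0] by simp
qed

lemma integral_gaussian_real: "0 < \<sigma> \<Longrightarrow> (\<integral>y. gaussian \<sigma> (y::real) \<partial>lborel) = \<sigma> * sqrt (2 * pi)"
  by (simp add: gaussian_real_eq_normal_density real_sqrt_mult)

lemma integrable_gaussian_iexp_real:
  "0 < \<sigma> \<Longrightarrow> integrable lborel (\<lambda>y::real. gaussian \<sigma> y *\<^sub>R iexp (\<zeta> * y))"
  by (rule Bochner_Integration.integrable_bound[OF integrable_gaussian_real[of \<sigma>]])
     (auto simp: norm_mult gaussian_nonneg)

lemma integral_gaussian_iexp_real:
  assumes "0 < \<sigma>"
  shows "(\<integral>y. gaussian \<sigma> (y::real) *\<^sub>R iexp (\<zeta> * y) \<partial>lborel)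
           = complex_of_real (\<sigma> * sqrt (2 * pi) * exp (- (\<sigma> * \<zeta>)\<^sup>2 / 2))"
proof -
  have scaled: "gaussian \<sigma> (\<sigma> * x) *\<^sub>R iexp (\<zeta> * (\<sigma> * x))
      = sqrt (2 * pi) *\<^sub>R (std_normal_density x *\<^sub>R iexp (\<sigma> * \<zeta> * x))" for x
    using assms by (simp add: gaussian_real std_normal_density_def power_mult_distrib mult_ac)
  have "(\<integral>y. gaussian \<sigma> y *\<^sub>R iexp (\<zeta> * y) \<partial>lborel)
      = \<sigma> *\<^sub>R (\<integral>x. gaussian \<sigma> (\<sigma> * x) *\<^sub>R iexp (\<zeta> * (\<sigma> * x)) \<partial>lborel)"
    using lborel_integral_real_affine[of \<sigma> "\<lambda>y. gaussian \<sigma> y *\<^sub>R iexp (\<zeta> * y)" 0] assms by simp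
  also have "\<dots> = (\<sigma> * sqrt (2 * pi)) *\<^sub>R char std_normal_distribution (\<sigma> * \<zeta>)"
    unfolding scaled integral_scaleR_right char_def by (subst integral_density) auto
  also have "\<dots> = complex_of_real (\<sigma> * sqrt (2 * pi) * exp (- (\<sigma> * \<zeta>)\<^sup>2 / 2))"
    by (simp add: char_std_normal_distribution scaleR_conv_of_real)
  finally show ?thesis .
qed

lemma
  fixes f :: "'a::euclidean_space \<Rightarrow> real \<Rightarrow> complex"
  assumes int: "\<And>b. b \<in> Basis \<Longrightarrow> integrable lborel (f b)"
  shows integrable_lborel_prod_Basis: "integrable (lborel::'a measure) (\<lambda>x. \<Prod>b\<in>Basis. f b (x \<bullet> b))"
    and integral_lborel_prod_Basis:
      "(\<integral>x. (\<Prod>b\<in>Basis. f b (x \<bullet> b)) \<partial>(lborel::'a measure)) = (\<Prod>b\<in>Basis. (\<integral>y. f b y \<partial>lborel))"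
proof -
  interpret P: finite_product_sigma_finite "\<lambda>_. lborel" "Basis::'a set"
    by standard simp
  have [measurable]: "\<And>b. b \<in> Basis \<Longrightarrow> f b \<in> borel_measurable borel"
    using int by (metis borel_measurable_integrable measurable_lborel1 measurable_lborel2)
  have coords[measurable]: "(\<lambda>g. \<Sum>b\<in>Basis. g b *\<^sub>R b) \<in> measurable (\<Pi>\<^sub>M b\<in>(Basis::'a set). lborel) borel"
    by measurable
  have eq: "(\<Prod>b\<in>Basis. f b ((\<Sum>b\<in>Basis. g b *\<^sub>R b) \<bullet> b)) = (\<Prod>b\<in>Basis. f b (g b))" for g
    by (intro prod.cong refl) (simp add: inner_sum_left inner_Basis if_distrib sum.delta cong: if_cong)
  have I: "integrable (\<Pi>\<^sub>M b\<in>(Basis::'a set). lborel) (\<lambda>g. \<Prod>b\<in>Basis. f b (g b))"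
    by (rule P.product_integrable_prod) (auto intro: int)
  show "integrable (lborel::'a measure) (\<lambda>x. \<Prod>b\<in>Basis. f b (x \<bullet> b))"
    by (subst lborel_eq) (simp add: integrable_distr_eq[OF coords] eq I)
  have "(\<integral>x. (\<Prod>b\<in>Basis. f b (x \<bullet> b)) \<partial>(lborel::'a measure))
      = (\<integral>g. (\<Prod>b\<in>Basis. f b (g b)) \<partial>(\<Pi>\<^sub>M b\<in>(Basis::'a set). lborel))"
    by (subst lborel_eq) (simp add: integral_distr[OF coords] eq)
  also have "\<dots> = (\<Prod>b\<in>Basis. (\<integral>y. f b y \<partial>lborel))"
    by (rule P.product_integral_prod) (auto intro: int)
  finally show "(\<integral>x. (\<Prod>b\<in>Basis. f b (x \<bullet> b)) \<partial>(lborel::'a measure)) = (\<Prod>b\<in>Basis. (\<integral>y. f b y \<partial>lborel))" .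
qed

lemma gaussian_prod_Basis: "gaussian \<sigma> (x::'a::euclidean_space) = (\<Prod>b\<in>Basis. gaussian \<sigma> (x \<bullet> b))"
proof -
  have "(norm x)\<^sup>2 = (\<Sum>b\<in>Basis. (x \<bullet> b)\<^sup>2)"
    unfolding power2_norm_eq_inner euclidean_inner[of x x] by (simp add: power2_eq_square)
  then have "- (norm x)\<^sup>2 / (2 * \<sigma>\<^sup>2) = (\<Sum>b\<in>(Basis::'a set). - (x \<bullet> b)\<^sup>2 / (2 * \<sigma>\<^sup>2))"
    by (simp add: sum_negf sum_divide_distrib)
  then show ?thesis
    by (simp add: gaussian_def exp_sum)
qed

lemma iexp_inner_prod_Basis:
  "iexp ((\<zeta>::'a::euclidean_space) \<bullet> x) = (\<Prod>b\<in>Basis. iexp ((\<zeta> \<bullet> b) * (x \<bullet> b)))"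
proof -
  have "\<i> * complex_of_real (\<zeta> \<bullet> x) = (\<Sum>b\<in>(Basis::'a set). \<i> * complex_of_real ((\<zeta> \<bullet> b) * (x \<bullet> b)))"
    unfolding euclidean_inner[of \<zeta> x] by (simp add: sum_distrib_left)
  then show ?thesis
    by (simp add: exp_sum)
qed

lemma
  fixes \<zeta> :: "'a::euclidean_space"
  assumes "0 < \<sigma>"
  shows integrable_gaussian_iexp: "integrable lborel (\<lambda>x::'a. gaussian \<sigma> x *\<^sub>R iexp (\<zeta> \<bullet> x))"
    and integral_gaussian_iexp:
      "(\<integral>x. gaussian \<sigma> x *\<^sub>R iexp (\<zeta> \<bullet> x) \<partial>lborel) = complex_of_real (gaussian_hat \<sigma> \<zeta>)"
proof -
  have coord: "gaussian \<sigma> x *\<^sub>R iexp (\<zeta> \<bullet> x)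
      = (\<Prod>b\<in>Basis. gaussian \<sigma> (x \<bullet> b) *\<^sub>R iexp ((\<zeta> \<bullet> b) * (x \<bullet> b)))" for x :: 'a
    unfolding gaussian_prod_Basis[of \<sigma> x] iexp_inner_prod_Basis[of \<zeta> x]
    by (simp add: scaleR_conv_of_real prod.distrib)
  have prod: "(\<lambda>x::'a. gaussian \<sigma> x *\<^sub>R iexp (\<zeta> \<bullet> x))
      = (\<lambda>x. \<Prod>b\<in>Basis. (\<lambda>y. gaussian \<sigma> y *\<^sub>R iexp ((\<zeta> \<bullet> b) * y)) (x \<bullet> b))"
    by (simp add: coord)
  show "integrable lborel (\<lambda>x::'a. gaussian \<sigma> x *\<^sub>R iexp (\<zeta> \<bullet> x))"
    unfolding prod by (rule integrable_lborel_prod_Basis) (rule integrable_gaussian_iexp_real[OF assms])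
  have "(\<integral>x. gaussian \<sigma> x *\<^sub>R iexp (\<zeta> \<bullet> x) \<partial>lborel)
      = (\<Prod>b\<in>Basis. complex_of_real (\<sigma> * sqrt (2 * pi) * exp (- (\<sigma> * (\<zeta> \<bullet> b))\<^sup>2 / 2)))"
    unfolding prod integral_lborel_prod_Basis[OF integrable_gaussian_iexp_real[OF assms]]
    by (rule prod.cong[OF refl], rule integral_gaussian_iexp_real[OF assms])
  also have "\<dots> = complex_of_real ((\<sigma> * sqrt (2 * pi)) ^ DIM('a) * gaussian (1 / \<sigma>) \<zeta>)"
    using assms unfolding gaussian_prod_Basis[of "1 / \<sigma>" \<zeta>]
    by (simp add: gaussian_real prod.distrib power_mult_distrib power_divide mult_ac)
  also have "\<dots> = complex_of_real (gaussian_hat \<sigma> \<zeta>)"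
    using assms by (simp add: gaussian_hat_def gaussian_def power_mult_distrib power_divide)
  finally show "(\<integral>x. gaussian \<sigma> x *\<^sub>R iexp (\<zeta> \<bullet> x) \<partial>lborel) = complex_of_real (gaussian_hat \<sigma> \<zeta>)" .
qed

lemma integrable_gaussian: "0 < \<sigma> \<Longrightarrow> integrable lborel (gaussian \<sigma> :: 'a::euclidean_space \<Rightarrow> real)"
  using integrable_gaussian_iexp[of \<sigma> "0::'a"]
  by (simp add: scaleR_conv_of_real complex_of_real_integrable_eq)

lemma nn_integral_gaussian:
  assumes "0 < \<sigma>"
  shows "(\<integral>\<^sup>+ x. ennreal (gaussian \<sigma> (x::'a::euclidean_space)) \<partial>lborel) = ennreal ((\<sigma> * sqrt (2 * pi)) ^ DIM('a))"
proof -
  have "(\<integral>\<^sup>+ y. ennreal (gaussian \<sigma> (y::real)) \<partial>lborel) = ennreal (\<sigma> * sqrt (2 * pi))"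
    using assms by (subst nn_integral_eq_integral)
      (auto simp: integrable_gaussian_real integral_gaussian_real gaussian_nonneg)
  moreover have "ennreal (gaussian \<sigma> x) = (\<Prod>b\<in>Basis. ennreal (gaussian \<sigma> (x \<bullet> b)))" for x :: 'a
    unfolding gaussian_prod_Basis[of \<sigma> x] by (simp add: prod_ennreal gaussian_nonneg)
  ultimately show ?thesis
    using assms by (simp, subst nn_integral_lborel_prod) (auto simp: ennreal_power)
qed

lemma nn_integral_gaussian_hat:
  assumes "0 < \<sigma>"
  shows "(\<integral>\<^sup>+ \<xi>. ennreal (gaussian_hat \<sigma> (\<xi>::'a::euclidean_space)) \<partial>lborel) = ennreal ((2 * pi) ^ DIM('a))"
proof -
  define c where "c = (\<sigma> * sqrt (2 * pi)) ^ DIM('a)"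
  have c: "0 \<le> c"
    using assms by (simp add: c_def)
  have "gaussian_hat \<sigma> \<xi> = c * gaussian (1 / \<sigma>) \<xi>" for \<xi> :: 'a
    using assms by (simp add: c_def gaussian_hat_def gaussian_def power_mult_distrib power_divide)
  then have "(\<integral>\<^sup>+ \<xi>. ennreal (gaussian_hat \<sigma> (\<xi>::'a)) \<partial>lborel)
      = (\<integral>\<^sup>+ \<xi>. ennreal c * ennreal (gaussian (1 / \<sigma>) (\<xi>::'a)) \<partial>lborel)"
    using c by (intro nn_integral_cong) (simp add: ennreal_mult gaussian_nonneg)
  also have "\<dots> = ennreal c * ennreal ((1 / \<sigma> * sqrt (2 * pi)) ^ DIM('a))"
    using assms by (simp add: nn_integral_cmult nn_integral_gaussian)
  also have "\<dots> = ennreal (c * (1 / \<sigma> * sqrt (2 * pi)) ^ DIM('a))"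
    using c assms by (simp add: ennreal_mult)
  also have "c * (1 / \<sigma> * sqrt (2 * pi)) ^ DIM('a) = (2 * pi) ^ DIM('a)"
  proof -
    have "\<sigma> * sqrt (2 * pi) * (1 / \<sigma> * sqrt (2 * pi)) = 2 * pi"
      using assms by simp
    then show ?thesis
      unfolding c_def by (simp only: power_mult_distrib[symmetric])
  qed
  finally show ?thesis .
qed

definition fourier :: "('a::euclidean_space \<Rightarrow> complex) \<Rightarrow> 'a \<Rightarrow> complex" where
  "fourier f x = (\<integral>\<xi>. f \<xi> * iexp (\<xi> \<bullet> x) \<partial>lborel)"

lemma borel_measurable_fourier [measurable]:
  assumes [measurable]: "f \<in> borel_measurable borel"
  shows "fourier f \<in> borel_measurable borel"
proof -
  have "(\<lambda>(x::'a, \<xi>::'a). f \<xi> * iexp (\<xi> \<bullet> x)) \<in> borel_measurable (borel \<Otimes>\<^sub>M lborel)"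
    by measurable
  then show ?thesis
    unfolding fourier_def[abs_def] by (rule lborel.borel_measurable_lebesgue_integral)
qed

lemma norm_fourier_le: "integrable lborel f \<Longrightarrow> cmod (fourier f x) \<le> (\<integral>\<xi>. cmod (f \<xi>) \<partial>lborel)"
  unfolding fourier_def using integral_norm_bound[of lborel "\<lambda>\<xi>. f \<xi> * iexp (\<xi> \<bullet> x)"]
  by (simp add: norm_mult)

lemma integrable_mult_iexp:
  fixes f :: "'a::euclidean_space \<Rightarrow> complex"
  assumes "integrable lborel f"
  shows "integrable lborel (\<lambda>\<xi>. f \<xi> * iexp (\<xi> \<bullet> x))"
proof (rule Bochner_Integration.integrable_bound[OF integrable_norm[OF assms]])
  have [measurable]: "f \<in> borel_measurable borel"
    using assms by (auto dest: borel_measurable_integrable)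
  show "(\<lambda>\<xi>. f \<xi> * iexp (\<xi> \<bullet> x)) \<in> borel_measurable lborel"
    by measurable
qed (simp add: norm_mult)

lemma integrable_pair_lborel_mult:
  fixes g :: "'a::euclidean_space \<Rightarrow> real" and h :: "'b::euclidean_space \<Rightarrow> real"
  assumes g: "integrable lborel g" and h: "integrable lborel h"
  shows "integrable (lborel \<Otimes>\<^sub>M lborel) (\<lambda>p. g (fst p) * h (snd p))"
proof (rule lborel_pair.Fubini_integrable)
  have [measurable]: "g \<in> borel_measurable borel" "h \<in> borel_measurable borel"
    using g h by (auto dest: borel_measurable_integrable)
  show "(\<lambda>p. g (fst p) * h (snd p)) \<in> borel_measurable (lborel \<Otimes>\<^sub>M lborel)"
    by measurable
  show "integrable lborel (\<lambda>x. \<integral>y. norm (g (fst (x, y)) * h (snd (x, y))) \<partial>lborel)"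
    using g by (simp add: abs_mult)
qed (use h in simp)

lemma nn_integral_lborel_translate:
  fixes g :: "'a::euclidean_space \<Rightarrow> ennreal"
  assumes [measurable]: "g \<in> borel_measurable borel"
  shows "(\<integral>\<^sup>+ x. g (c + x) \<partial>lborel) = (\<integral>\<^sup>+ x. g x \<partial>lborel)"
  by (subst lborel_distr_plus[symmetric, of c]) (simp add: nn_integral_distr)

lemma iexp_diff: "iexp (a - b) = iexp a * iexp (- b)"
proof -
  have "iexp (a - b) = exp (\<i> * complex_of_real a + (- (\<i> * complex_of_real b)))"
    by (simp add: right_diff_distrib)
  then show ?thesis
    by (simp only: exp_add) simp
qed

lemma integral_gaussian_iexp_cnj_fourier:
  fixes f :: "'a::euclidean_space \<Rightarrow> complex"
  assumes f: "integrable lborel f" and \<sigma>: "0 < \<sigma>"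
  shows "(\<integral>x. gaussian \<sigma> x *\<^sub>R (iexp (\<xi> \<bullet> x) * cnj (fourier f x)) \<partial>lborel)
           = (\<integral>\<eta>. cnj (f \<eta>) * complex_of_real (gaussian_hat \<sigma> (\<xi> - \<eta>)) \<partial>lborel)"
proof -
  have [measurable]: "f \<in> borel_measurable borel"
    using f by (auto dest: borel_measurable_integrable)
  then have [measurable]: "(\<lambda>\<eta>. cnj (f \<eta>)) \<in> borel_measurable borel"
    by (intro borel_measurable_continuous_on[OF continuous_on_cnj[OF continuous_on_id]])
  define H where "H = (\<lambda>x \<eta>. gaussian \<sigma> x *\<^sub>R (cnj (f \<eta>) * iexp (\<xi> \<bullet> x - \<eta> \<bullet> x)))"
  have H_int: "integrable (lborel \<Otimes>\<^sub>M lborel) (case_prod H)"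
  proof (rule Bochner_Integration.integrable_bound
      [OF integrable_pair_lborel_mult[OF integrable_gaussian[OF \<sigma>] integrable_norm[OF f]]])
    show "case_prod H \<in> borel_measurable (lborel \<Otimes>\<^sub>M lborel)"
      unfolding H_def by measurable
  qed (auto simp: H_def norm_mult gaussian_nonneg)
  have "cnj (fourier f x) = (\<integral>\<eta>. cnj (f \<eta>) * iexp (- (\<eta> \<bullet> x)) \<partial>lborel)" for x
    unfolding fourier_def Bochner_Integration.integral_cnj[symmetric]
    by (simp add: exp_cnj del: Bochner_Integration.integral_cnj)
  moreover have "H x \<eta> = gaussian \<sigma> x *\<^sub>R (iexp (\<xi> \<bullet> x) * (cnj (f \<eta>) * iexp (- (\<eta> \<bullet> x))))"
    for x \<eta>
    unfolding H_def iexp_diff by (simp add: mult_ac)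
  ultimately have "gaussian \<sigma> x *\<^sub>R (iexp (\<xi> \<bullet> x) * cnj (fourier f x)) = (\<integral>\<eta>. H x \<eta> \<partial>lborel)" for x
    by simp
  then have "(\<integral>x. gaussian \<sigma> x *\<^sub>R (iexp (\<xi> \<bullet> x) * cnj (fourier f x)) \<partial>lborel)
      = (\<integral>x. (\<integral>\<eta>. H x \<eta> \<partial>lborel) \<partial>lborel)"
    by simp
  also have "\<dots> = (\<integral>\<eta>. (\<integral>x. H x \<eta> \<partial>lborel) \<partial>lborel)"
    using lborel_pair.Fubini_integral[OF H_int] by simp
  also have "\<dots> = (\<integral>\<eta>. cnj (f \<eta>) * complex_of_real (gaussian_hat \<sigma> (\<xi> - \<eta>)) \<partial>lborel)"
    unfolding H_def
    by (simp add: scaleR_conv_of_real mult_ac integral_gaussian_iexp[OF \<sigma>, symmetric] inner_diff_left)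
  finally show ?thesis .
qed

lemma
  fixes f :: "'a::euclidean_space \<Rightarrow> complex"
  assumes f: "integrable lborel f" and \<sigma>: "0 < \<sigma>"
  shows integrable_gaussian_hat_quadratic_form:
      "integrable lborel (\<lambda>\<xi>. f \<xi> * (\<integral>\<eta>. cnj (f \<eta>) * complex_of_real (gaussian_hat \<sigma> (\<xi> - \<eta>)) \<partial>lborel))"
    and integral_gaussian_norm_fourier_sq:
      "complex_of_real (\<integral>x. gaussian \<sigma> x * (cmod (fourier f x))\<^sup>2 \<partial>lborel)
         = (\<integral>\<xi>. f \<xi> * (\<integral>\<eta>. cnj (f \<eta>) * complex_of_real (gaussian_hat \<sigma> (\<xi> - \<eta>)) \<partial>lborel) \<partial>lborel)"
proof -
  have [measurable]: "f \<in> borel_measurable borel"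
    using f by (auto dest: borel_measurable_integrable)
  then have [measurable]: "(\<lambda>x. cnj (fourier f x)) \<in> borel_measurable borel"
    by (intro borel_measurable_continuous_on[OF continuous_on_cnj[OF continuous_on_id]]) measurable
  define N where "N = (\<integral>\<xi>. cmod (f \<xi>) \<partial>lborel)"
  have fourier_le: "cmod (fourier f x) \<le> N" for x
    unfolding N_def by (rule norm_fourier_le[OF f])
  define G where "G = (\<lambda>x \<xi>. gaussian \<sigma> x *\<^sub>R (f \<xi> * iexp (\<xi> \<bullet> x) * cnj (fourier f x)))"
  have G_int: "integrable (lborel \<Otimes>\<^sub>M lborel) (case_prod G)"
  proof (rule Bochner_Integration.integrable_bound)
    show "integrable (lborel \<Otimes>\<^sub>M lborel) (\<lambda>p::'a \<times> 'a. N * gaussian \<sigma> (fst p) * cmod (f (snd p)))"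
      using integrable_pair_lborel_mult[OF integrable_mult_right[OF integrable_gaussian[OF \<sigma>]]
          integrable_norm[OF f], of N]
      by (simp add: mult.assoc)
    show "case_prod G \<in> borel_measurable (lborel \<Otimes>\<^sub>M lborel)"
      unfolding G_def by measurable
    have "norm (G x \<xi>) \<le> N * gaussian \<sigma> x * cmod (f \<xi>)" for x \<xi>
    proof -
      have "norm (G x \<xi>) = (gaussian \<sigma> x * cmod (f \<xi>)) * cmod (fourier f x)"
        by (simp add: G_def norm_mult gaussian_nonneg)
      also have "\<dots> \<le> (gaussian \<sigma> x * cmod (f \<xi>)) * N"
        by (intro mult_left_mono fourier_le) (simp add: gaussian_nonneg)
      finally show ?thesis
        by (simp add: mult_ac)
    qed
    then show "AE p in lborel \<Otimes>\<^sub>M lborel. norm (case_prod G p) \<le> norm (N * gaussian \<sigma> (fst p) * cmod (f (snd p)))"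
      by (intro AE_I2) (auto intro: order_trans[OF _ abs_ge_self])
  qed
  have G_x: "(\<integral>\<xi>. G x \<xi> \<partial>lborel) = complex_of_real (gaussian \<sigma> x * (cmod (fourier f x))\<^sup>2)" for x
    by (simp add: G_def fourier_def[symmetric] complex_norm_square[symmetric] scaleR_conv_of_real)
  have G_\<xi>: "(\<integral>x. G x \<xi> \<partial>lborel)
      = f \<xi> * (\<integral>\<eta>. cnj (f \<eta>) * complex_of_real (gaussian_hat \<sigma> (\<xi> - \<eta>)) \<partial>lborel)" for \<xi>
    using integral_gaussian_iexp_cnj_fourier[OF f \<sigma>, of \<xi>, symmetric]
    by (simp add: G_def scaleR_conv_of_real mult_ac)
  show "integrable lborel (\<lambda>\<xi>. f \<xi> * (\<integral>\<eta>. cnj (f \<eta>) * complex_of_real (gaussian_hat \<sigma> (\<xi> - \<eta>)) \<partial>lborel))"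
    using lborel_pair.integrable_snd[OF G_int] by (simp add: G_\<xi>)
  have "complex_of_real (\<integral>x. gaussian \<sigma> x * (cmod (fourier f x))\<^sup>2 \<partial>lborel) = (\<integral>x. (\<integral>\<xi>. G x \<xi> \<partial>lborel) \<partial>lborel)"
    by (simp only: G_x integral_complex_of_real)
  also have "\<dots> = (\<integral>\<xi>. (\<integral>x. G x \<xi> \<partial>lborel) \<partial>lborel)"
    using lborel_pair.Fubini_integral[OF G_int] by simp
  finally show "complex_of_real (\<integral>x. gaussian \<sigma> x * (cmod (fourier f x))\<^sup>2 \<partial>lborel)
      = (\<integral>\<xi>. f \<xi> * (\<integral>\<eta>. cnj (f \<eta>) * complex_of_real (gaussian_hat \<sigma> (\<xi> - \<eta>)) \<partial>lborel) \<partial>lborel)"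
    by (simp add: G_\<xi>)
qed

lemma nn_integral_Schur_test_even_kernel:
  fixes u k :: "'a::euclidean_space \<Rightarrow> real"
  assumes [measurable]: "u \<in> borel_measurable borel" "k \<in> borel_measurable borel"
    and k_nonneg: "\<And>x. 0 \<le> k x" and k_even: "\<And>x. k (- x) = k x"
  shows "(\<integral>\<^sup>+ \<xi>. (\<integral>\<^sup>+ \<eta>. ennreal (u \<xi> * u \<eta> * k (\<xi> - \<eta>)) \<partial>lborel) \<partial>lborel)
           \<le> (\<integral>\<^sup>+ x. ennreal (k x) \<partial>lborel) * (\<integral>\<^sup>+ \<xi>. ennreal ((u \<xi>)\<^sup>2) \<partial>lborel)"
proof -
  define K where "K = (\<integral>\<^sup>+ x. ennreal (k x) \<partial>lborel)"
  define U where "U = (\<integral>\<^sup>+ \<xi>. ennreal ((u \<xi>)\<^sup>2) \<partial>lborel)"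
  have k_swap: "k (\<xi> - \<eta>) = k (\<eta> - \<xi>)" for \<xi> \<eta>
    by (metis k_even minus_diff_eq)
  have row: "(\<integral>\<^sup>+ \<eta>. ennreal (k (\<xi> - \<eta>)) \<partial>lborel) = K" for \<xi>
    using nn_integral_lborel_translate[of "\<lambda>x. ennreal (k x)" "- \<xi>"] by (simp add: K_def k_swap)
  have half: "(\<integral>\<^sup>+ \<xi>. (\<integral>\<^sup>+ \<eta>. ennreal ((u \<xi>)\<^sup>2 * k (\<xi> - \<eta>)) \<partial>lborel) \<partial>lborel) = K * U"
  proof -
    have "(\<integral>\<^sup>+ \<eta>. ennreal ((u \<xi>)\<^sup>2 * k (\<xi> - \<eta>)) \<partial>lborel) = K * ennreal ((u \<xi>)\<^sup>2)" for \<xi>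
      using row[of \<xi>] k_nonneg by (simp add: ennreal_mult nn_integral_multc mult.commute)
    then show ?thesis
      by (simp add: U_def nn_integral_cmult)
  qed
  have "(\<integral>\<^sup>+ \<xi>. (\<integral>\<^sup>+ \<eta>. ennreal (u \<xi> * u \<eta> * k (\<xi> - \<eta>)) \<partial>lborel) \<partial>lborel)
      \<le> (\<integral>\<^sup>+ \<xi>. (\<integral>\<^sup>+ \<eta>. ennreal (1/2) * ennreal ((u \<xi>)\<^sup>2 * k (\<xi> - \<eta>))
            + ennreal (1/2) * ennreal ((u \<eta>)\<^sup>2 * k (\<eta> - \<xi>)) \<partial>lborel) \<partial>lborel)"
  proof (intro nn_integral_mono)
    \<comment> \<open>AM-GM splits the kernel between the two variables; each half integrates it in one of them.\<close>
    fix \<xi> \<eta> :: 'a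
    have "u \<xi> * u \<eta> \<le> (u \<xi>)\<^sup>2 / 2 + (u \<eta>)\<^sup>2 / 2"
      using sum_squares_bound[of "u \<xi>" "u \<eta>"] by (simp add: power2_eq_square)
    from mult_right_mono[OF this k_nonneg[of "\<xi> - \<eta>"]]
    have "u \<xi> * u \<eta> * k (\<xi> - \<eta>) \<le> 1/2 * ((u \<xi>)\<^sup>2 * k (\<xi> - \<eta>)) + 1/2 * ((u \<eta>)\<^sup>2 * k (\<eta> - \<xi>))"
      unfolding k_swap[of \<eta> \<xi>] by (simp add: algebra_simps)
    then have "ennreal (u \<xi> * u \<eta> * k (\<xi> - \<eta>))
        \<le> ennreal (1/2 * ((u \<xi>)\<^sup>2 * k (\<xi> - \<eta>)) + 1/2 * ((u \<eta>)\<^sup>2 * k (\<eta> - \<xi>)))"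
      by (rule ennreal_leI)
    also have "\<dots> = ennreal (1/2 * ((u \<xi>)\<^sup>2 * k (\<xi> - \<eta>))) + ennreal (1/2 * ((u \<eta>)\<^sup>2 * k (\<eta> - \<xi>)))"
      using k_nonneg[of "\<xi> - \<eta>"] k_nonneg[of "\<eta> - \<xi>"] by (intro ennreal_plus) auto
    also have "\<dots> = ennreal (1/2) * ennreal ((u \<xi>)\<^sup>2 * k (\<xi> - \<eta>)) + ennreal (1/2) * ennreal ((u \<eta>)\<^sup>2 * k (\<eta> - \<xi>))"
      using k_nonneg[of "\<xi> - \<eta>"] k_nonneg[of "\<eta> - \<xi>"]
      by (intro arg_cong2[where f="(+)"] ennreal_mult) auto
    finally show "ennreal (u \<xi> * u \<eta> * k (\<xi> - \<eta>))
        \<le> ennreal (1/2) * ennreal ((u \<xi>)\<^sup>2 * k (\<xi> - \<eta>)) + ennreal (1/2) * ennreal ((u \<eta>)\<^sup>2 * k (\<eta> - \<xi>))" .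
  qed
  also have "\<dots> = ennreal (1/2) * (\<integral>\<^sup>+ \<xi>. (\<integral>\<^sup>+ \<eta>. ennreal ((u \<xi>)\<^sup>2 * k (\<xi> - \<eta>)) \<partial>lborel) \<partial>lborel)
      + ennreal (1/2) * (\<integral>\<^sup>+ \<eta>. (\<integral>\<^sup>+ \<xi>. ennreal ((u \<eta>)\<^sup>2 * k (\<eta> - \<xi>)) \<partial>lborel) \<partial>lborel)"
    by (simp add: nn_integral_add nn_integral_cmult
        lborel_pair.Fubini'[of "\<lambda>\<xi> \<eta>. ennreal ((u \<eta>)\<^sup>2 * k (\<eta> - \<xi>))"])
  also have "\<dots> = (ennreal (1/2) + ennreal (1/2)) * (K * U)"
    by (simp only: half distrib_right)
  also have "ennreal (1/2) + ennreal (1/2) = 1"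
    using ennreal_plus[of "1/2" "1/2"] by simp
  finally show ?thesis
    by (simp add: K_def U_def)
qed

lemma norm_integral_cnj_mult_gaussian_hat_le:
  fixes f :: "'a::euclidean_space \<Rightarrow> complex"
  assumes f: "integrable lborel f" and \<sigma>: "0 < \<sigma>"
  shows "ennreal (cmod (\<integral>\<eta>. cnj (f \<eta>) * complex_of_real (gaussian_hat \<sigma> (\<xi> - \<eta>)) \<partial>lborel))
           \<le> (\<integral>\<^sup>+ \<eta>. ennreal (cmod (f \<eta>) * gaussian_hat \<sigma> (\<xi> - \<eta>)) \<partial>lborel)"
proof -
  have [measurable]: "f \<in> borel_measurable borel"
    using f by (auto dest: borel_measurable_integrable)
  then have [measurable]: "(\<lambda>\<eta>. cnj (f \<eta>)) \<in> borel_measurable borel"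
    by (intro borel_measurable_continuous_on[OF continuous_on_cnj[OF continuous_on_id]])
  have "integrable lborel (\<lambda>\<eta>. cnj (f \<eta>) * complex_of_real (gaussian_hat \<sigma> (\<xi> - \<eta>)))"
  proof (rule Bochner_Integration.integrable_bound
      [OF integrable_mult_left[OF integrable_norm[OF f], of "(\<sigma> * sqrt (2 * pi)) ^ DIM('a)"]])
    show "(\<lambda>\<eta>. cnj (f \<eta>) * complex_of_real (gaussian_hat \<sigma> (\<xi> - \<eta>))) \<in> borel_measurable lborel"
      by measurable
  qed (use \<sigma> in \<open>auto simp: norm_mult gaussian_hat_nonneg abs_mult power_abs
        intro!: mult_left_mono gaussian_hat_le\<close>)
  then show ?thesis
    using integral_norm_bound_ennreal by (fastforce simp: norm_mult gaussian_hat_nonneg[OF \<sigma>])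
qed

lemma nn_integral_gaussian_norm_fourier_sq_le:
  fixes f :: "'a::euclidean_space \<Rightarrow> complex"
  assumes f: "integrable lborel f" and \<sigma>: "0 < \<sigma>"
  shows "(\<integral>\<^sup>+ x. ennreal (gaussian \<sigma> x * (cmod (fourier f x))\<^sup>2) \<partial>lborel)
           \<le> ennreal ((2 * pi) ^ DIM('a)) * (\<integral>\<^sup>+ \<xi>. ennreal ((cmod (f \<xi>))\<^sup>2) \<partial>lborel)"
proof -
  have [measurable]: "f \<in> borel_measurable borel"
    using f by (auto dest: borel_measurable_integrable)
  define Q where "Q = (\<lambda>\<xi>. \<integral>\<eta>. cnj (f \<eta>) * complex_of_real (gaussian_hat \<sigma> (\<xi> - \<eta>)) \<partial>lborel)"
  define N where "N = (\<integral>\<xi>. cmod (f \<xi>) \<partial>lborel)"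
  have "integrable lborel (\<lambda>x. gaussian \<sigma> x * (cmod (fourier f x))\<^sup>2)"
  proof (rule Bochner_Integration.integrable_bound[OF integrable_mult_left[OF integrable_gaussian[OF \<sigma>], of "N\<^sup>2"]])
    show "(\<lambda>x. gaussian \<sigma> x * (cmod (fourier f x))\<^sup>2) \<in> borel_measurable lborel"
      by measurable
    show "AE x in lborel. norm (gaussian \<sigma> x * (cmod (fourier f x))\<^sup>2) \<le> norm (gaussian \<sigma> x * N\<^sup>2)"
      unfolding N_def
      by (intro AE_I2) (auto simp: gaussian_nonneg intro!: mult_left_mono power_mono norm_fourier_le[OF f])
  qed
  moreover have "(\<integral>x. gaussian \<sigma> x * (cmod (fourier f x))\<^sup>2 \<partial>lborel) = Re (\<integral>\<xi>. f \<xi> * Q \<xi> \<partial>lborel)"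
    using arg_cong[OF integral_gaussian_norm_fourier_sq[OF f \<sigma>], of Re] by (simp add: Q_def)
  ultimately have "(\<integral>\<^sup>+ x. ennreal (gaussian \<sigma> x * (cmod (fourier f x))\<^sup>2) \<partial>lborel)
      = ennreal (Re (\<integral>\<xi>. f \<xi> * Q \<xi> \<partial>lborel))"
    by (simp add: nn_integral_eq_integral gaussian_nonneg)
  also have "\<dots> \<le> ennreal (cmod (\<integral>\<xi>. f \<xi> * Q \<xi> \<partial>lborel))"
    by (intro ennreal_leI complex_Re_le_cmod)
  also have "\<dots> \<le> (\<integral>\<^sup>+ \<xi>. ennreal (cmod (f \<xi> * Q \<xi>)) \<partial>lborel)"
    using integrable_gaussian_hat_quadratic_form[OF f \<sigma>] unfolding Q_def
    by (rule integral_norm_bound_ennreal)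
  also have "\<dots> \<le> (\<integral>\<^sup>+ \<xi>. (\<integral>\<^sup>+ \<eta>. ennreal (cmod (f \<xi>) * cmod (f \<eta>) * gaussian_hat \<sigma> (\<xi> - \<eta>)) \<partial>lborel) \<partial>lborel)"
  proof (rule nn_integral_mono)
    fix \<xi> :: 'a
    show "ennreal (cmod (f \<xi> * Q \<xi>))
        \<le> (\<integral>\<^sup>+ \<eta>. ennreal (cmod (f \<xi>) * cmod (f \<eta>) * gaussian_hat \<sigma> (\<xi> - \<eta>)) \<partial>lborel)"
      using norm_integral_cnj_mult_gaussian_hat_le[OF f \<sigma>, of \<xi>]
      by (simp add: Q_def norm_mult ennreal_mult mult.assoc nn_integral_cmult mult_left_mono
          gaussian_hat_nonneg[OF \<sigma>])
  qed
  also have "\<dots> \<le> (\<integral>\<^sup>+ x. ennreal (gaussian_hat \<sigma> (x::'a)) \<partial>lborel) * (\<integral>\<^sup>+ \<xi>. ennreal ((cmod (f \<xi>))\<^sup>2) \<partial>lborel)"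
    using nn_integral_Schur_test_even_kernel[of "\<lambda>\<xi>. cmod (f \<xi>)" "gaussian_hat \<sigma>"]
    by (simp add: gaussian_hat_nonneg[OF \<sigma>] gaussian_hat_minus)
  also have "\<dots> = ennreal ((2 * pi) ^ DIM('a)) * (\<integral>\<^sup>+ \<xi>. ennreal ((cmod (f \<xi>))\<^sup>2) \<partial>lborel)"
    by (simp add: nn_integral_gaussian_hat[OF \<sigma>])
  finally show ?thesis .
qed

lemma gaussian_mono: "0 < \<sigma> \<Longrightarrow> \<sigma> \<le> \<tau> \<Longrightarrow> gaussian \<sigma> x \<le> gaussian \<tau> x"
  unfolding gaussian_def by (auto intro!: divide_left_mono power_mono)

lemma gaussian_tendsto_1: "(\<lambda>n. gaussian (real (Suc n)) x) \<longlonglongrightarrow> 1"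
proof -
  have "(\<lambda>n. exp (- ((norm x)\<^sup>2 / 2) * (inverse (real (Suc n)))\<^sup>2)) \<longlonglongrightarrow> exp (- ((norm x)\<^sup>2 / 2) * 0\<^sup>2)"
    by (intro tendsto_intros LIMSEQ_inverse_real_of_nat)
  then show ?thesis
    by (simp add: gaussian_def field_simps power2_eq_square)
qed

theorem plancherel_le:
  fixes f :: "'a::euclidean_space \<Rightarrow> complex"
  assumes f: "integrable lborel f"
  shows "(\<integral>\<^sup>+ x. ennreal ((cmod (fourier f x))\<^sup>2) \<partial>lborel)
           \<le> ennreal ((2 * pi) ^ DIM('a)) * (\<integral>\<^sup>+ \<xi>. ennreal ((cmod (f \<xi>))\<^sup>2) \<partial>lborel)"
proof -
  have [measurable]: "f \<in> borel_measurable borel"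
    using f by (auto dest: borel_measurable_integrable)
  define h where "h = (\<lambda>n x. ennreal (gaussian (real (Suc n)) x * (cmod (fourier f x))\<^sup>2))"
  have h_incseq: "incseq h"
    unfolding h_def by (intro monoI le_funI ennreal_leI mult_right_mono gaussian_mono) auto
  have "(SUP n. h n x) = ennreal ((cmod (fourier f x))\<^sup>2)" for x
  proof (rule LIMSEQ_unique)
    show "(\<lambda>n. h n x) \<longlonglongrightarrow> (SUP n. h n x)"
      using h_incseq by (intro LIMSEQ_SUP) (auto simp: incseq_def le_fun_def)
    show "(\<lambda>n. h n x) \<longlonglongrightarrow> ennreal ((cmod (fourier f x))\<^sup>2)"
      using tendsto_mult_right[OF gaussian_tendsto_1[of x], of "(cmod (fourier f x))\<^sup>2"]
      unfolding h_def by (intro tendsto_ennrealI) simp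
  qed
  then have "(\<integral>\<^sup>+ x. ennreal ((cmod (fourier f x))\<^sup>2) \<partial>lborel) = (\<integral>\<^sup>+ x. (SUP n. h n x) \<partial>lborel)"
    by simp
  also have "\<dots> = (SUP n. integral\<^sup>N lborel (h n))"
    by (rule nn_integral_monotone_convergence_SUP[OF h_incseq]) (simp add: h_def)
  also have "\<dots> \<le> ennreal ((2 * pi) ^ DIM('a)) * (\<integral>\<^sup>+ \<xi>. ennreal ((cmod (f \<xi>))\<^sup>2) \<partial>lborel)"
    unfolding h_def by (intro SUP_least nn_integral_gaussian_norm_fourier_sq_le[OF f]) simp
  finally show ?thesis .
qed

lemma norm_one_minus_iexp_sq: "(cmod (1 - iexp b))\<^sup>2 = 2 - 2 * cos b"
proof -
  have "(cmod (1 - iexp b))\<^sup>2 = (1 - cos b)\<^sup>2 + (sin b)\<^sup>2"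
    by (simp add: cmod_power2 Re_exp Im_exp)
  also have "\<dots> = 2 - 2 * cos b"
    using sin_cos_squared_add[of b] by (simp add: power2_eq_square algebra_simps)
  finally show ?thesis .
qed

lemma Re_iexp_one_minus_iexp: "Re (complex_of_real g * (1 - iexp b) * iexp a) = g * cos a - g * cos (a + b)"
proof -
  have "complex_of_real g * (1 - iexp b) * iexp a = complex_of_real g * (iexp a - iexp (a + b))"
    by (simp add: algebra_simps distrib_left exp_add)
  then show ?thesis
    by (simp add: Re_exp right_diff_distrib)
qed

lemma nn_integral_cos_transform_increment_le:
  fixes g :: "'a::euclidean_space \<Rightarrow> real"
  assumes g: "integrable lborel g"
  shows "(\<integral>\<^sup>+ x. ennreal (((\<integral>\<xi>. g \<xi> * cos (\<xi> \<bullet> x) \<partial>lborel) - (\<integral>\<xi>. g \<xi> * cos (\<xi> \<bullet> (x + z)) \<partial>lborel))\<^sup>2) \<partial>lborel)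
           \<le> ennreal ((2 * pi) ^ DIM('a)) * (\<integral>\<^sup>+ \<xi>. ennreal ((g \<xi>)\<^sup>2 * (2 - 2 * cos (\<xi> \<bullet> z))) \<partial>lborel)"
proof -
  have [measurable]: "g \<in> borel_measurable borel"
    using g by (auto dest: borel_measurable_integrable)
  define f where "f \<xi> = complex_of_real (g \<xi>) * (1 - iexp (\<xi> \<bullet> z))" for \<xi>
  have [measurable]: "f \<in> borel_measurable borel"
    unfolding f_def by measurable
  have f_int: "integrable lborel f"
  proof (rule Bochner_Integration.integrable_bound[OF integrable_mult_left[OF integrable_abs[OF g], of 2]])
    have "cmod (1 - iexp (\<xi> \<bullet> z)) \<le> 2" for \<xi>
      using norm_triangle_ineq4[of 1 "iexp (\<xi> \<bullet> z)"] by simp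
    then show "AE \<xi> in lborel. norm (f \<xi>) \<le> norm (\<bar>g \<xi>\<bar> * 2)"
      by (intro AE_I2) (simp add: f_def norm_mult mult_left_mono)
  qed simp
  have cos_int: "integrable lborel (\<lambda>\<xi>. g \<xi> * cos (\<xi> \<bullet> y))" for y :: 'a
    by (rule Bochner_Integration.integrable_bound[OF integrable_abs[OF g]])
      (auto simp: abs_mult intro!: mult_left_le)
  have Re_fourier: "Re (fourier f x) = (\<integral>\<xi>. g \<xi> * cos (\<xi> \<bullet> x) \<partial>lborel) - (\<integral>\<xi>. g \<xi> * cos (\<xi> \<bullet> (x + z)) \<partial>lborel)"
    for x
  proof -
    have "Re (fourier f x) = (\<integral>\<xi>. g \<xi> * cos (\<xi> \<bullet> x) - g \<xi> * cos (\<xi> \<bullet> (x + z)) \<partial>lborel)"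
      unfolding fourier_def integral_Re[OF integrable_mult_iexp[OF f_int], symmetric]
      by (intro Bochner_Integration.integral_cong refl)
        (simp only: f_def Re_iexp_one_minus_iexp inner_add_right)
    also have "\<dots> = (\<integral>\<xi>. g \<xi> * cos (\<xi> \<bullet> x) \<partial>lborel) - (\<integral>\<xi>. g \<xi> * cos (\<xi> \<bullet> (x + z)) \<partial>lborel)"
      by (rule Bochner_Integration.integral_diff[OF cos_int cos_int])
    finally show ?thesis .
  qed
  have "(\<integral>\<^sup>+ x. ennreal (((\<integral>\<xi>. g \<xi> * cos (\<xi> \<bullet> x) \<partial>lborel) - (\<integral>\<xi>. g \<xi> * cos (\<xi> \<bullet> (x + z)) \<partial>lborel))\<^sup>2) \<partial>lborel)
      \<le> (\<integral>\<^sup>+ x. ennreal ((cmod (fourier f x))\<^sup>2) \<partial>lborel)"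
    unfolding Re_fourier[symmetric]
    by (intro nn_integral_mono ennreal_leI) (simp add: abs_Re_le_cmod power_mono flip: abs_le_square_iff)
  also have "\<dots> \<le> ennreal ((2 * pi) ^ DIM('a)) * (\<integral>\<^sup>+ \<xi>. ennreal ((cmod (f \<xi>))\<^sup>2) \<partial>lborel)"
    by (rule plancherel_le[OF f_int])
  also have "(\<integral>\<^sup>+ \<xi>. ennreal ((cmod (f \<xi>))\<^sup>2) \<partial>lborel)
      = (\<integral>\<^sup>+ \<xi>. ennreal ((g \<xi>)\<^sup>2 * (2 - 2 * cos (\<xi> \<bullet> z))) \<partial>lborel)"
    by (simp add: f_def norm_mult power_mult_distrib norm_one_minus_iexp_sq)
  finally show ?thesis .
qed

definition spectral_kernel :: "('a::euclidean_space \<Rightarrow> real) \<Rightarrow> real \<Rightarrow> 'a \<Rightarrow> real" where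
  "spectral_kernel P t x = (2 * pi) powr (- real DIM('a)) * (\<integral>\<xi>. exp (- (t / 8) * P \<xi>) * cos (\<xi> \<bullet> x) \<partial>lborel)"

lemma K_LKS_eq_spectral_kernel: "K_LKS = spectral_kernel (\<lambda>\<xi>. (-2 + (norm \<xi>)\<^sup>2)\<^sup>2)"
  by (simp add: fun_eq_iff K_LKS_def spectral_kernel_def)

lemma K_SFO_eq_spectral_kernel: "K_SFO = spectral_kernel (\<lambda>\<xi>. norm \<xi> ^ 4)"
  by (simp add: fun_eq_iff K_SFO_def spectral_kernel_def)

lemma integrable_exp_symbol:
  fixes P :: "'a::euclidean_space \<Rightarrow> real"
  assumes [measurable]: "P \<in> borel_measurable borel"
    and P_ge: "\<And>\<xi>. (norm \<xi>)\<^sup>2 - c \<le> P \<xi>" and s: "0 < s"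
  shows "integrable lborel (\<lambda>\<xi>. exp (- (s / 8) * P \<xi>))"
proof (rule Bochner_Integration.integrable_bound
    [OF integrable_mult_left[OF integrable_gaussian[of "2 / sqrt s"], of "exp (s * c / 8)"]])
  have "- (s / 8) * P \<xi> \<le> - (norm \<xi>)\<^sup>2 / (2 * (2 / sqrt s)\<^sup>2) + s * c / 8" for \<xi> :: 'a
    using mult_left_mono[OF P_ge[of \<xi>], of "s / 8"] s by (simp add: power_divide field_simps)
  then show "AE \<xi> in lborel. norm (exp (- (s / 8) * P \<xi>)) \<le> norm (gaussian (2 / sqrt s) \<xi> * exp (s * c / 8))"
    by (intro AE_I2) (simp add: gaussian_def flip: exp_add)
qed (use s in simp_all)

lemma one_minus_cos_le_powr:
  fixes \<theta> :: real
  assumes "0 < \<alpha>" "\<alpha> \<le> 1"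
  shows "2 - 2 * cos \<theta> \<le> 4 * \<bar>\<theta>\<bar> powr (2 * \<alpha>)"
proof (cases "\<bar>\<theta>\<bar> \<le> 1")
  case True
  have "2 - 2 * cos \<theta> = 4 * (sin (\<theta> / 2))\<^sup>2"
    using cos_double_sin[of "\<theta> / 2"] by simp
  also have "\<dots> \<le> 4 * (\<theta> / 2)\<^sup>2"
    using abs_sin_x_le_abs_x[of "\<theta> / 2"] by (simp add: abs_le_square_iff flip: abs_le_square_iff)
  also have "\<dots> \<le> 4 * \<theta>\<^sup>2"
    by (simp add: power_divide)
  also have "\<theta>\<^sup>2 = \<bar>\<theta>\<bar> powr 2"
    by (cases "\<theta> = 0") (simp_all add: powr_realpow')
  also have "\<bar>\<theta>\<bar> powr 2 \<le> \<bar>\<theta>\<bar> powr (2 * \<alpha>)"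
    using True assms by (intro powr_mono') auto
  finally show ?thesis
    by simp
next
  case False
  have "2 - 2 * cos \<theta> \<le> 4"
    using cos_ge_minus_one[of \<theta>] by linarith
  also have "4 \<le> 4 * \<bar>\<theta>\<bar> powr (2 * \<alpha>)"
    using False assms ge_one_powr_ge_zero[of "\<bar>\<theta>\<bar>" "2 * \<alpha>"] by simp
  finally show ?thesis .
qed

lemma one_minus_cos_inner_le_powr:
  fixes \<xi> z :: "'a::euclidean_space"
  assumes "0 < \<alpha>" "\<alpha> \<le> 1"
  shows "2 - 2 * cos (\<xi> \<bullet> z) \<le> 4 * norm z powr (2 * \<alpha>) * norm \<xi> powr (2 * \<alpha>)"
proof -
  have "2 - 2 * cos (\<xi> \<bullet> z) \<le> 4 * \<bar>\<xi> \<bullet> z\<bar> powr (2 * \<alpha>)"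
    by (rule one_minus_cos_le_powr[OF assms])
  also have "\<bar>\<xi> \<bullet> z\<bar> powr (2 * \<alpha>) \<le> (norm \<xi> * norm z) powr (2 * \<alpha>)"
    using assms by (intro powr_mono2 Cauchy_Schwarz_ineq2) auto
  finally show ?thesis
    by (simp add: powr_mult mult_ac)
qed

lemma nn_integral_spectral_kernel_increment_le:
  fixes P :: "'a::euclidean_space \<Rightarrow> real"
  assumes [measurable]: "P \<in> borel_measurable borel"
    and P_ge: "\<And>\<xi>. (norm \<xi>)\<^sup>2 - c \<le> P \<xi>" and s: "0 < s" and \<alpha>: "0 < \<alpha>" "\<alpha> \<le> 1"
  shows "(\<integral>\<^sup>+ x. ennreal ((spectral_kernel P s x - spectral_kernel P s (x + z))\<^sup>2) \<partial>lborel)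
           \<le> ennreal (4 * norm z powr (2 * \<alpha>)) * (\<integral>\<^sup>+ \<xi>. ennreal (exp (- (s / 4) * P \<xi>) * norm \<xi> powr (2 * \<alpha>)) \<partial>lborel)"
proof -
  define c where "c = (2 * pi) powr (- real DIM('a))"
  define g where "g \<xi> = exp (- (s / 8) * P \<xi>)" for \<xi>
  have cos_transform_measurable [measurable]:
    "(\<lambda>x. \<integral>\<xi>. g \<xi> * cos (\<xi> \<bullet> (x + y)) \<partial>lborel) \<in> borel_measurable borel" for y
  proof -
    have "(\<lambda>(x, \<xi>). g \<xi> * cos (\<xi> \<bullet> (x + y))) \<in> borel_measurable (borel \<Otimes>\<^sub>M lborel)"
      unfolding g_def by measurable
    then show ?thesis
      by (rule lborel.borel_measurable_lebesgue_integral)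
  qed
  have g_sq: "(g \<xi>)\<^sup>2 = exp (- (s / 4) * P \<xi>)" for \<xi>
    unfolding g_def by (simp flip: exp_double)
  have c_sq: "c\<^sup>2 * (2 * pi) ^ DIM('a) \<le> 1"
  proof -
    have "(2 * pi) ^ DIM('a) = (2 * pi) powr real DIM('a)"
      by (simp add: powr_realpow)
    then have "c\<^sup>2 * (2 * pi) ^ DIM('a) = (2 * pi) powr (- real DIM('a))"
      by (simp add: c_def power2_eq_square powr_minus)
    also have "\<dots> \<le> 1"
      using pi_gt3 ge_one_powr_ge_zero[of "2 * pi" "real DIM('a)"] by (simp add: powr_minus inverse_le_1_iff)
    finally show ?thesis .
  qed
  have "(spectral_kernel P s x - spectral_kernel P s (x + z))\<^sup>2
      = c\<^sup>2 * ((\<integral>\<xi>. g \<xi> * cos (\<xi> \<bullet> x) \<partial>lborel) - (\<integral>\<xi>. g \<xi> * cos (\<xi> \<bullet> (x + z)) \<partial>lborel))\<^sup>2" for x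
    by (simp add: spectral_kernel_def c_def g_def power_mult_distrib flip: right_diff_distrib)
  then have "(\<integral>\<^sup>+ x. ennreal ((spectral_kernel P s x - spectral_kernel P s (x + z))\<^sup>2) \<partial>lborel)
      = ennreal (c\<^sup>2) * (\<integral>\<^sup>+ x. ennreal (((\<integral>\<xi>. g \<xi> * cos (\<xi> \<bullet> x) \<partial>lborel)
          - (\<integral>\<xi>. g \<xi> * cos (\<xi> \<bullet> (x + z)) \<partial>lborel))\<^sup>2) \<partial>lborel)"
    using cos_transform_measurable[of 0] by (simp add: ennreal_mult nn_integral_cmult)
  also have "\<dots> \<le> ennreal (c\<^sup>2) * (ennreal ((2 * pi) ^ DIM('a)) * (\<integral>\<^sup>+ \<xi>. ennreal ((g \<xi>)\<^sup>2 * (2 - 2 * cos (\<xi> \<bullet> z))) \<partial>lborel))"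
    unfolding g_def
    by (intro mult_left_mono nn_integral_cos_transform_increment_le integrable_exp_symbol[OF _ P_ge s]) simp_all
  also have "\<dots> \<le> (\<integral>\<^sup>+ \<xi>. ennreal ((g \<xi>)\<^sup>2 * (2 - 2 * cos (\<xi> \<bullet> z))) \<partial>lborel)"
    using c_sq mult_right_mono[OF ennreal_leI[OF c_sq]]
    by (simp add: mult.assoc[symmetric] ennreal_mult[symmetric])
  also have "\<dots> \<le> (\<integral>\<^sup>+ \<xi>. ennreal (4 * norm z powr (2 * \<alpha>)) * ennreal (exp (- (s / 4) * P \<xi>) * norm \<xi> powr (2 * \<alpha>)) \<partial>lborel)"
    using one_minus_cos_inner_le_powr[OF \<alpha>]
    by (intro nn_integral_mono) (simp add: g_sq mult_left_mono mult_ac flip: ennreal_mult)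
  also have "\<dots> = ennreal (4 * norm z powr (2 * \<alpha>)) * (\<integral>\<^sup>+ \<xi>. ennreal (exp (- (s / 4) * P \<xi>) * norm \<xi> powr (2 * \<alpha>)) \<partial>lborel)"
    by (rule nn_integral_cmult) measurable
  finally show ?thesis .
qed

lemma nn_integral_one_plus_sq_powr_finite:
  fixes q :: real
  assumes q: "1 / 2 < q"
  shows "(\<integral>\<^sup>+ y. ennreal ((1 + y\<^sup>2) powr (- q)) \<partial>lborel) < \<infinity>"
proof -
  define h where "h y = ennreal (indicator {-1..1} y) + ennreal (indicator {1..} y * y powr (- 2 * q))
      + ennreal (indicator {1..} (- y) * (- y) powr (- 2 * q))" for y :: real
  have far: "(1 + y\<^sup>2) powr (- q) \<le> \<bar>y\<bar> powr (- 2 * q)" if "1 \<le> \<bar>y\<bar>" for y :: real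
  proof -
    have "(1 + y\<^sup>2) powr (- q) \<le> (\<bar>y\<bar> powr 2) powr (- q)"
      using that q by (intro powr_mono2') (auto simp: powr_realpow')
    also have "\<dots> = \<bar>y\<bar> powr (- 2 * q)"
      by (simp only: powr_powr) simp
    finally show ?thesis .
  qed
  have near: "(1 + y\<^sup>2) powr (- q) \<le> 1" for y :: real
    using q ge_one_powr_ge_zero[of "1 + y\<^sup>2" q] by (simp add: powr_minus inverse_le_1_iff)
  have "ennreal ((1 + y\<^sup>2) powr (- q)) \<le> h y" for y
  proof (cases "\<bar>y\<bar> \<le> 1")
    case True
    then have "ennreal ((1 + y\<^sup>2) powr (- q)) \<le> ennreal (indicator {-1..1} y)"
      using near[of y] by (auto simp: indicator_def abs_le_iff intro: ennreal_leI)
    then show ?thesis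
      unfolding h_def by (rule order_trans) (simp add: add.assoc)
  next
    case False
    then have "ennreal (\<bar>y\<bar> powr (- 2 * q)) \<le> h y"
      by (cases "0 \<le> y") (simp_all add: h_def indicator_def)
    moreover have "ennreal ((1 + y\<^sup>2) powr (- q)) \<le> ennreal (\<bar>y\<bar> powr (- 2 * q))"
      using False far[of y] by (intro ennreal_leI) simp
    ultimately show ?thesis
      by (rule order_trans[rotated])
  qed
  then have "(\<integral>\<^sup>+ y. ennreal ((1 + y\<^sup>2) powr (- q)) \<partial>lborel) \<le> (\<integral>\<^sup>+ y. h y \<partial>lborel)"
    by (rule nn_integral_mono)
  also have "\<dots> = 2 + (\<integral>\<^sup>+ y. ennreal (indicator {1..} y * y powr (- 2 * q)) \<partial>lborel)
      + (\<integral>\<^sup>+ y. ennreal (indicator {1..} y * y powr (- 2 * q)) \<partial>lborel)"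
    using nn_integral_real_affine[of "\<lambda>y. ennreal (indicator {1..} y * y powr (- 2 * q))" "-1" 0]
    by (simp add: h_def nn_integral_add ennreal_indicator)
  also have "\<dots> < \<infinity>"
  proof -
    have "(\<integral>\<^sup>+ y. ennreal (indicator {1..} y * y powr (- 2 * q)) \<partial>lborel) = ennreal (- 1 / (- 2 * q + 1))"
      using has_integral_powr_to_inf[of "- 2 * q" 1] q
      by (intro nn_integral_has_integral_lebesgue) auto
    then show ?thesis
      by (simp only: ennreal_add_less_top) simp
  qed
  finally show ?thesis .
qed

lemma norm_powr_le_prod_Basis:
  fixes \<xi> :: "'a::euclidean_space"
  assumes p: "0 < p" and \<xi>: "1 \<le> norm \<xi>"
  shows "norm \<xi> powr (- p) \<le> 2 powr (p / 2) * (\<Prod>b\<in>Basis. (1 + (\<xi> \<bullet> b)\<^sup>2) powr (- (p / (2 * DIM('a)))))"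
proof -
  define q where "q = p / (2 * DIM('a))"
  have "(\<Prod>b\<in>(Basis::'a set). 1 + (\<xi> \<bullet> b)\<^sup>2) \<le> (\<Prod>b\<in>(Basis::'a set). 1 + (norm \<xi>)\<^sup>2)"
    by (intro prod_mono) (auto simp: Basis_le_norm abs_le_square_iff[symmetric] simp del: power2_abs)
  then have "((1 + (norm \<xi>)\<^sup>2) ^ DIM('a)) powr (- q) \<le> (\<Prod>b\<in>(Basis::'a set). 1 + (\<xi> \<bullet> b)\<^sup>2) powr (- q)"
    using p by (intro powr_mono2') (auto simp: q_def add_pos_nonneg intro!: prod_pos)
  also have "\<dots> = (\<Prod>b\<in>Basis. (1 + (\<xi> \<bullet> b)\<^sup>2) powr (- q))"
    by (rule prod_powr_distrib)
  also have "((1 + (norm \<xi>)\<^sup>2) ^ DIM('a)) powr (- q) = (1 + (norm \<xi>)\<^sup>2) powr (- (p / 2))"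
  proof -
    have "(1 + (norm \<xi>)\<^sup>2) ^ DIM('a) = (1 + (norm \<xi>)\<^sup>2) powr real DIM('a)"
      by (simp add: powr_realpow add_pos_nonneg)
    then show ?thesis
      by (simp add: powr_powr q_def)
  qed
  finally have prod: "(1 + (norm \<xi>)\<^sup>2) powr (- (p / 2)) \<le> (\<Prod>b\<in>Basis. (1 + (\<xi> \<bullet> b)\<^sup>2) powr (- q))" .
  have "(norm \<xi>)\<^sup>2 = norm \<xi> powr 2"
    using \<xi> by (simp add: powr_realpow)
  then have "((norm \<xi>)\<^sup>2) powr (- (p / 2)) = norm \<xi> powr (- p)"
    by (simp only: powr_powr) simp
  then have "2 powr (- (p / 2)) * norm \<xi> powr (- p) = (2 * (norm \<xi>)\<^sup>2) powr (- (p / 2))"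
    by (simp add: powr_mult)
  also have "\<dots> \<le> (1 + (norm \<xi>)\<^sup>2) powr (- (p / 2))"
    using p \<xi> by (intro powr_mono2') (auto simp: add_pos_nonneg one_le_power)
  finally have "2 powr (p / 2) * (2 powr (- (p / 2)) * norm \<xi> powr (- p))
      \<le> 2 powr (p / 2) * (\<Prod>b\<in>Basis. (1 + (\<xi> \<bullet> b)\<^sup>2) powr (- q))"
    using prod by (intro mult_left_mono) simp_all
  then show ?thesis
    by (simp add: q_def mult.assoc[symmetric] flip: powr_add)
qed

lemma nn_integral_norm_powr_tail_finite:
  assumes p: "real DIM('a::euclidean_space) < p"
  shows "(\<integral>\<^sup>+ \<xi>. ennreal (indicator {\<xi>::'a. 1 \<le> norm \<xi>} \<xi> * norm \<xi> powr (- p)) \<partial>lborel) < \<infinity>"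
proof -
  define q where "q = p / (2 * DIM('a))"
  have q: "1 / 2 < q"
    using p by (simp add: q_def field_simps)
  have p_pos: "0 < p"
    using p by (rule le_less_trans[rotated]) simp
  have "(\<integral>\<^sup>+ \<xi>. ennreal (indicator {\<xi>::'a. 1 \<le> norm \<xi>} \<xi> * norm \<xi> powr (- p)) \<partial>lborel)
      \<le> (\<integral>\<^sup>+ (\<xi>::'a). ennreal (2 powr (p / 2)) * (\<Prod>b\<in>Basis. ennreal ((1 + (\<xi> \<bullet> b)\<^sup>2) powr (- q))) \<partial>lborel)"
  proof (rule nn_integral_mono)
    fix \<xi> :: 'a
    have "indicator {\<xi>. 1 \<le> norm \<xi>} \<xi> * norm \<xi> powr (- p) \<le> 2 powr (p / 2) * (\<Prod>b\<in>Basis. (1 + (\<xi> \<bullet> b)\<^sup>2) powr (- q))"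
      using norm_powr_le_prod_Basis[OF p_pos, of \<xi>]
      by (auto simp: indicator_def q_def intro!: mult_nonneg_nonneg prod_nonneg)
    then show "ennreal (indicator {\<xi>. 1 \<le> norm \<xi>} \<xi> * norm \<xi> powr (- p))
        \<le> ennreal (2 powr (p / 2)) * (\<Prod>b\<in>Basis. ennreal ((1 + (\<xi> \<bullet> b)\<^sup>2) powr (- q)))"
      by (simp add: ennreal_leI ennreal_mult prod_ennreal prod_nonneg flip: ennreal_mult)
  qed
  also have "\<dots> = ennreal (2 powr (p / 2)) * (\<Prod>b\<in>(Basis::'a set). \<integral>\<^sup>+ y. ennreal ((1 + y\<^sup>2) powr (- q)) \<partial>lborel)"
    by (subst nn_integral_cmult, measurable, subst nn_integral_lborel_prod) auto
  also have "\<dots> < \<infinity>"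
    using nn_integral_one_plus_sq_powr_finite[OF q]
    by (simp add: ennreal_mult_less_top power_less_top_ennreal)
  finally show ?thesis .
qed

lemma nn_integral_exp_on_interval_le_length:
  assumes "0 \<le> a" "0 \<le> t"
  shows "(\<integral>\<^sup>+ s \<in> {0..t}. ennreal (exp (- (s / 4) * a)) \<partial>lborel) \<le> ennreal t"
proof -
  have "(\<integral>\<^sup>+ s \<in> {0..t}. ennreal (exp (- (s / 4) * a)) \<partial>lborel) \<le> (\<integral>\<^sup>+ s. indicator {0..t} s \<partial>lborel)"
    using assms by (intro nn_integral_mono) (auto simp: indicator_def ennreal_le_1)
  then show ?thesis
    using assms by simp
qed

lemma nn_integral_exp_on_interval_le_inverse:
  assumes a: "0 < a"
  shows "(\<integral>\<^sup>+ s \<in> {0..t}. ennreal (exp (- (s / 4) * a)) \<partial>lborel) \<le> ennreal (4 / a)"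
proof -
  interpret prob_space "density lborel (exponential_density (a / 4))"
    using a by (intro prob_space_exponential_density) simp
  have "(\<integral>\<^sup>+ s \<in> {0..t}. ennreal (exp (- (s / 4) * a)) \<partial>lborel)
      \<le> (\<integral>\<^sup>+ s. ennreal (4 / a) * ennreal (exponential_density (a / 4) s) \<partial>lborel)"
    using a by (intro nn_integral_mono)
      (auto simp: indicator_def exponential_density_def field_simps simp flip: ennreal_mult)
  also have "\<dots> = ennreal (4 / a) * emeasure (density lborel (exponential_density (a / 4))) UNIV"
    by (simp add: nn_integral_cmult emeasure_density)
  finally show ?thesis
    using emeasure_space_1 by simp
qed

lemma norm_powr_mult_time_integral_le:
  fixes \<xi> :: "'a::euclidean_space"
  assumes a: "0 \<le> a" and a_large: "2 < norm \<xi> \<Longrightarrow> norm \<xi> ^ 4 / 4 \<le> a"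
    and \<alpha>: "0 < \<alpha>" "\<alpha> \<le> 1" and t: "0 \<le> t"
  shows "ennreal (norm \<xi> powr (2 * \<alpha>)) * (\<integral>\<^sup>+ s \<in> {0..t}. ennreal (exp (- (s / 4) * a)) \<partial>lborel)
           \<le> ennreal (4 * t * indicator (cball 0 2) \<xi>)
             + ennreal (16 * indicator {\<xi>. 1 \<le> norm \<xi>} \<xi> * norm \<xi> powr (2 * \<alpha> - 4))"
proof (cases "norm \<xi> \<le> 2")
  case True
  have "norm \<xi> powr (2 * \<alpha>) \<le> 2 powr (2 * \<alpha>)"
    using True \<alpha> by (intro powr_mono2) auto
  also have "\<dots> \<le> 2 powr 2"
    using \<alpha> by (intro powr_mono) auto
  finally have "ennreal (norm \<xi> powr (2 * \<alpha>)) * (\<integral>\<^sup>+ s \<in> {0..t}. ennreal (exp (- (s / 4) * a)) \<partial>lborel)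
      \<le> ennreal 4 * ennreal t"
    by (intro mult_mono ennreal_leI nn_integral_exp_on_interval_le_length a t) simp_all
  also have "\<dots> = ennreal (4 * t * indicator (cball 0 2) \<xi>)"
    using True t by (simp add: ennreal_mult)
  finally show ?thesis
    by (rule order_trans) simp
next
  case False
  then have \<xi>: "2 < norm \<xi>" by simp
  have "0 < norm \<xi> ^ 4 / 4"
    using \<xi> by (simp add: zero_less_norm_iff[symmetric] del: zero_less_norm_iff)
  then have a_pos: "0 < a"
    using a_large[OF \<xi>] by linarith
  have "4 / a \<le> 4 / (norm \<xi> ^ 4 / 4)"
    using a_large[OF \<xi>] \<xi> a_pos by (intro divide_left_mono) (auto intro!: mult_pos_pos)
  then have "ennreal (norm \<xi> powr (2 * \<alpha>)) * (\<integral>\<^sup>+ s \<in> {0..t}. ennreal (exp (- (s / 4) * a)) \<partial>lborel)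
      \<le> ennreal (norm \<xi> powr (2 * \<alpha>)) * ennreal (16 / norm \<xi> ^ 4)"
    using nn_integral_exp_on_interval_le_inverse[OF a_pos, of t]
    by (intro mult_left_mono) (auto intro: order_trans ennreal_leI)
  also have "\<dots> = ennreal (16 * norm \<xi> powr (2 * \<alpha> - 4))"
    using \<xi> by (simp add: ennreal_mult[symmetric] powr_diff powr_realpow)
  also have "\<dots> \<le> ennreal (4 * t * indicator (cball 0 2) \<xi>)
      + ennreal (16 * indicator {\<xi>. 1 \<le> norm \<xi>} \<xi> * norm \<xi> powr (2 * \<alpha> - 4))"
    using \<xi> by simp
  finally show ?thesis .
qed

lemma nn_integral_time_spectral_le:
  fixes P :: "'a::euclidean_space \<Rightarrow> real"
  assumes [measurable]: "P \<in> borel_measurable borel"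
    and P_nonneg: "\<And>\<xi>. 0 \<le> P \<xi>" and P_large: "\<And>\<xi>. 2 < norm \<xi> \<Longrightarrow> norm \<xi> ^ 4 / 4 \<le> P \<xi>"
    and \<alpha>: "0 < \<alpha>" "\<alpha> \<le> 1" and t: "0 \<le> t"
  shows "(\<integral>\<^sup>+ s \<in> {0..t}. (\<integral>\<^sup>+ \<xi>. ennreal (exp (- (s / 4) * P \<xi>) * norm \<xi> powr (2 * \<alpha>)) \<partial>lborel) \<partial>lborel)
           \<le> ennreal (4 * t) * emeasure lborel (cball (0::'a) 2)
             + 16 * (\<integral>\<^sup>+ \<xi>. ennreal (indicator {\<xi>::'a. 1 \<le> norm \<xi>} \<xi> * norm \<xi> powr (2 * \<alpha> - 4)) \<partial>lborel)"
proof -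
  have [measurable]: "cball (0::'a) 2 \<in> sets borel" "{\<xi>::'a. 1 \<le> norm \<xi>} \<in> sets borel"
    by (auto intro!: borel_closed closed_Collect_le continuous_intros)
  have "(\<integral>\<^sup>+ s \<in> {0..t}. (\<integral>\<^sup>+ \<xi>. ennreal (exp (- (s / 4) * P \<xi>) * norm \<xi> powr (2 * \<alpha>)) \<partial>lborel) \<partial>lborel)
      = (\<integral>\<^sup>+ \<xi>. (\<integral>\<^sup>+ s. ennreal (exp (- (s / 4) * P \<xi>) * norm \<xi> powr (2 * \<alpha>)) * indicator {0..t} s \<partial>lborel) \<partial>lborel)"
    by (subst lborel_pair.Fubini') (simp_all add: nn_integral_multc)
  also have "\<dots> = (\<integral>\<^sup>+ \<xi>. ennreal (norm \<xi> powr (2 * \<alpha>)) * (\<integral>\<^sup>+ s \<in> {0..t}. ennreal (exp (- (s / 4) * P \<xi>)) \<partial>lborel) \<partial>lborel)"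
    by (intro nn_integral_cong) (simp add: ennreal_mult mult_ac flip: nn_integral_cmult)
  also have "\<dots> \<le> (\<integral>\<^sup>+ \<xi>. ennreal (4 * t * indicator (cball 0 2) \<xi>)
      + ennreal (16 * indicator {\<xi>::'a. 1 \<le> norm \<xi>} \<xi> * norm \<xi> powr (2 * \<alpha> - 4)) \<partial>lborel)"
    by (intro nn_integral_mono norm_powr_mult_time_integral_le P_nonneg P_large \<alpha> t)
  also have "\<dots> = ennreal (4 * t) * emeasure lborel (cball (0::'a) 2)
      + 16 * (\<integral>\<^sup>+ \<xi>. ennreal (indicator {\<xi>::'a. 1 \<le> norm \<xi>} \<xi> * norm \<xi> powr (2 * \<alpha> - 4)) \<partial>lborel)"
    using t by (simp add: nn_integral_add nn_integral_cmult ennreal_mult ennreal_indicator mult.assoc)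
  finally show ?thesis .
qed

lemma nn_integral_time_spectral_kernel_increment_le:
  fixes P :: "'a::euclidean_space \<Rightarrow> real"
  assumes [measurable]: "P \<in> borel_measurable borel"
    and P_nonneg: "\<And>\<xi>. 0 \<le> P \<xi>" and P_ge: "\<And>\<xi>. (norm \<xi>)\<^sup>2 - c \<le> P \<xi>"
    and P_large: "\<And>\<xi>. 2 < norm \<xi> \<Longrightarrow> norm \<xi> ^ 4 / 4 \<le> P \<xi>"
    and \<alpha>: "0 < \<alpha>" "\<alpha> \<le> 1" and t: "0 \<le> t"
  shows "(\<integral>\<^sup>+ s \<in> {0..t}. (\<integral>\<^sup>+ x. ennreal ((spectral_kernel P s x - spectral_kernel P s (x + z))\<^sup>2) \<partial>lborel) \<partial>lborel)
           \<le> ennreal (4 * norm z powr (2 * \<alpha>)) * (ennreal (4 * t) * emeasure lborel (cball (0::'a) 2)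
             + 16 * (\<integral>\<^sup>+ \<xi>. ennreal (indicator {\<xi>::'a. 1 \<le> norm \<xi>} \<xi> * norm \<xi> powr (2 * \<alpha> - 4)) \<partial>lborel))"
proof -
  define B where "B = 4 * norm z powr (2 * \<alpha>)"
  have "(\<integral>\<^sup>+ s \<in> {0..t}. (\<integral>\<^sup>+ x. ennreal ((spectral_kernel P s x - spectral_kernel P s (x + z))\<^sup>2) \<partial>lborel) \<partial>lborel)
      \<le> (\<integral>\<^sup>+ s \<in> {0..t}. ennreal B * (\<integral>\<^sup>+ \<xi>. ennreal (exp (- (s / 4) * P \<xi>) * norm \<xi> powr (2 * \<alpha>)) \<partial>lborel) \<partial>lborel)"
  proof (rule nn_integral_mono_AE)
    show "AE s in lborel.
        (\<integral>\<^sup>+ x. ennreal ((spectral_kernel P s x - spectral_kernel P s (x + z))\<^sup>2) \<partial>lborel) * indicator {0..t} s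
        \<le> ennreal B * (\<integral>\<^sup>+ \<xi>. ennreal (exp (- (s / 4) * P \<xi>) * norm \<xi> powr (2 * \<alpha>)) \<partial>lborel) * indicator {0..t} s"
      using AE_lborel_singleton[of 0]
    proof eventually_elim
      case (elim s)
      show ?case
      proof (cases "s \<in> {0..t}")
        case True
        with elim have "0 < s" by auto
        with True show ?thesis
          using nn_integral_spectral_kernel_increment_le[OF _ P_ge _ \<alpha>, of s z] by (simp add: B_def)
      qed simp
    qed
  qed
  also have "\<dots> = ennreal B * (\<integral>\<^sup>+ s \<in> {0..t}. (\<integral>\<^sup>+ \<xi>. ennreal (exp (- (s / 4) * P \<xi>) * norm \<xi> powr (2 * \<alpha>)) \<partial>lborel) \<partial>lborel)"
    by (simp add: nn_integral_cmult mult.assoc)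
  also have "\<dots> \<le> ennreal B * (ennreal (4 * t) * emeasure lborel (cball (0::'a) 2)
      + 16 * (\<integral>\<^sup>+ \<xi>. ennreal (indicator {\<xi>::'a. 1 \<le> norm \<xi>} \<xi> * norm \<xi> powr (2 * \<alpha> - 4)) \<partial>lborel))"
    by (intro mult_left_mono nn_integral_time_spectral_le P_nonneg P_large \<alpha> t) simp_all
  finally show ?thesis
    by (simp only: B_def)
qed

lemma spectral_kernel_increment_bound:
  fixes P :: "'a::euclidean_space \<Rightarrow> real"
  assumes [measurable]: "P \<in> borel_measurable borel"
    and P_nonneg: "\<And>\<xi>. 0 \<le> P \<xi>" and P_ge: "\<And>\<xi>. (norm \<xi>)\<^sup>2 - c \<le> P \<xi>"
    and P_large: "\<And>\<xi>. 2 < norm \<xi> \<Longrightarrow> norm \<xi> ^ 4 / 4 \<le> P \<xi>"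
    and \<alpha>: "0 < \<alpha>" "\<alpha> \<le> 1" "real DIM('a) < 4 - 2 * \<alpha>"
  shows "\<exists>C>0. \<forall>t>0. \<forall>z::'a.
           (\<integral>\<^sup>+ s \<in> {0..t}. (\<integral>\<^sup>+ x. ennreal ((spectral_kernel P s x - spectral_kernel P s (x + z))\<^sup>2) \<partial>lborel) \<partial>lborel)
             \<le> ennreal (C * norm z powr (2 * \<alpha>) * max 1 (t / 4))"
proof -
  define A1 where "A1 = emeasure lborel (cball (0::'a) 2)"
  define A2 where "A2 = (\<integral>\<^sup>+ \<xi>. ennreal (indicator {\<xi>::'a. 1 \<le> norm \<xi>} \<xi> * norm \<xi> powr (2 * \<alpha> - 4)) \<partial>lborel)"
  have "A1 < \<infinity>"
    unfolding A1_def by (rule emeasure_bounded_finite) simp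
  then obtain a1 where a1: "0 \<le> a1" "A1 = ennreal a1"
    by (cases A1) auto
  have "A2 < \<infinity>"
    unfolding A2_def using nn_integral_norm_powr_tail_finite[of "4 - 2 * \<alpha>"] \<alpha> by simp
  then obtain a2 where a2: "0 \<le> a2" "A2 = ennreal a2"
    by (cases A2) auto
  define C where "C = 64 * (a1 + a2) + 1"
  have "(\<integral>\<^sup>+ s \<in> {0..t}. (\<integral>\<^sup>+ x. ennreal ((spectral_kernel P s x - spectral_kernel P s (x + z))\<^sup>2) \<partial>lborel) \<partial>lborel)
      \<le> ennreal (C * norm z powr (2 * \<alpha>) * max 1 (t / 4))" if t: "0 < t" for t and z :: 'a
  proof -
    define B where "B = 4 * norm z powr (2 * \<alpha>)"
    have "ennreal B * (ennreal (4 * t) * A1 + 16 * A2) = ennreal (B * (4 * t * a1 + 16 * a2))"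
    proof -
      have "ennreal (4 * t * a1) = ennreal (4 * t) * ennreal a1" "ennreal (16 * a2) = 16 * ennreal a2"
        using t a1 a2 by (simp_all add: ennreal_mult)
      moreover have "ennreal (4 * t * a1 + 16 * a2) = ennreal (4 * t * a1) + ennreal (16 * a2)"
        using t a1 a2 by (intro ennreal_plus) simp_all
      moreover have "ennreal (B * (4 * t * a1 + 16 * a2)) = ennreal B * ennreal (4 * t * a1 + 16 * a2)"
        using t a1 a2 by (intro ennreal_mult) (simp_all add: B_def)
      ultimately show ?thesis
        using a1 a2 by (simp only:)
    qed
    moreover have "B * (4 * t * a1 + 16 * a2) \<le> C * norm z powr (2 * \<alpha>) * max 1 (t / 4)"
    proof -
      have "4 * t * a1 \<le> 16 * a1 * max 1 (t / 4)"
        using a1 mult_left_mono[of "t / 4" "max 1 (t / 4)" "16 * a1"] by simp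
      moreover have "16 * a2 \<le> 16 * a2 * max 1 (t / 4)"
        using a2 mult_left_mono[of 1 "max 1 (t / 4)" "16 * a2"] by simp
      ultimately have "4 * t * a1 + 16 * a2 \<le> C / 4 * max 1 (t / 4)"
        by (simp add: C_def algebra_simps)
      then have "B * (4 * t * a1 + 16 * a2) \<le> B * (C / 4 * max 1 (t / 4))"
        by (rule mult_left_mono) (simp add: B_def)
      then show ?thesis
        by (simp add: B_def mult_ac)
    qed
    ultimately show ?thesis
      using nn_integral_time_spectral_kernel_increment_le[OF _ P_nonneg P_ge P_large \<alpha>(1,2), of t z] t
      unfolding A1_def[symmetric] A2_def[symmetric] B_def[symmetric]
      by (auto intro: order_trans ennreal_leI)
  qed
  moreover have "0 < C"
    using a1 a2 by (simp add: C_def)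
  ultimately show ?thesis
    by blast
qed

lemma LKS_symbol_bounds:
  fixes \<xi> :: "'a::real_normed_vector"
  shows "(norm \<xi>)\<^sup>2 - 9 / 4 \<le> (-2 + (norm \<xi>)\<^sup>2)\<^sup>2"
    and "2 < norm \<xi> \<Longrightarrow> norm \<xi> ^ 4 / 4 \<le> (-2 + (norm \<xi>)\<^sup>2)\<^sup>2"
proof -
  have "0 \<le> ((norm \<xi>)\<^sup>2 - 5 / 2)\<^sup>2"
    by simp
  then show "(norm \<xi>)\<^sup>2 - 9 / 4 \<le> (-2 + (norm \<xi>)\<^sup>2)\<^sup>2"
    by (simp add: power2_eq_square algebra_simps)
  assume "2 < norm \<xi>"
  then have "(norm \<xi>)\<^sup>2 / 2 \<le> -2 + (norm \<xi>)\<^sup>2"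
    using power_mono[of 2 "norm \<xi>" 2] by simp
  then have "((norm \<xi>)\<^sup>2 / 2)\<^sup>2 \<le> (-2 + (norm \<xi>)\<^sup>2)\<^sup>2"
    by (rule power_mono) simp
  then show "norm \<xi> ^ 4 / 4 \<le> (-2 + (norm \<xi>)\<^sup>2)\<^sup>2"
    by (simp add: power_divide flip: power_mult)
qed

lemma SFO_symbol_lower_bound: "(norm \<xi>)\<^sup>2 - 1 / 4 \<le> norm \<xi> ^ 4"
proof -
  have "0 \<le> ((norm \<xi>)\<^sup>2 - 1 / 2)\<^sup>2"
    by simp
  then show ?thesis
    by (simp add: power2_eq_square algebra_simps power4_eq_xxxx)
qed

theorem lemma3p3:
  fixes \<alpha> :: real
  assumes "alpha_range DIM('a::euclidean_space) \<alpha>"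
  shows "(\<exists>C>0. \<forall>t>0. \<forall>z::'a.
            (\<integral>\<^sup>+ s \<in> {0..t}. (\<integral>\<^sup>+ x. ennreal ((K_LKS s x - K_LKS s (x + z))\<^sup>2) \<partial>lborel) \<partial>lborel)
              \<le> ennreal (C * norm z powr (2 * \<alpha>) * max 1 (t / 4)))
       \<and> (\<exists>C>0. \<forall>t>0. \<forall>z::'a.
            (\<integral>\<^sup>+ s \<in> {0..t}. (\<integral>\<^sup>+ x. ennreal ((K_SFO s x - K_SFO s (x + z))\<^sup>2) \<partial>lborel) \<partial>lborel)
              \<le> ennreal (C * norm z powr (2 * \<alpha>) * max 1 (t / 4)))"
proof -
  have \<alpha>: "0 < \<alpha>" "\<alpha> \<le> 1" "real DIM('a) < 4 - 2 * \<alpha>"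
    using assms unfolding alpha_range_def by auto
  show ?thesis
    unfolding K_LKS_eq_spectral_kernel K_SFO_eq_spectral_kernel
  proof
    show "\<exists>C>0. \<forall>t>0. \<forall>z::'a. (\<integral>\<^sup>+ s \<in> {0..t}. (\<integral>\<^sup>+ x. ennreal ((spectral_kernel (\<lambda>\<xi>. (-2 + (norm \<xi>)\<^sup>2)\<^sup>2) s x
        - spectral_kernel (\<lambda>\<xi>. (-2 + (norm \<xi>)\<^sup>2)\<^sup>2) s (x + z))\<^sup>2) \<partial>lborel) \<partial>lborel)
        \<le> ennreal (C * norm z powr (2 * \<alpha>) * max 1 (t / 4))"
      by (rule spectral_kernel_increment_bound[OF _ _ LKS_symbol_bounds \<alpha>]) simp_all
    show "\<exists>C>0. \<forall>t>0. \<forall>z::'a. (\<integral>\<^sup>+ s \<in> {0..t}. (\<integral>\<^sup>+ x. ennreal ((spectral_kernel (\<lambda>\<xi>. norm \<xi> ^ 4) s x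
        - spectral_kernel (\<lambda>\<xi>. norm \<xi> ^ 4) s (x + z))\<^sup>2) \<partial>lborel) \<partial>lborel)
        \<le> ennreal (C * norm z powr (2 * \<alpha>) * max 1 (t / 4))"
      by (rule spectral_kernel_increment_bound[OF _ _ SFO_symbol_lower_bound _ \<alpha>]) simp_all
  qed
qed

end
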